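(* Let $d\ge 1$, $\sigma>0$, and let $A_0,A_1\in\mathbb{R}^{d\times d}$ be constant matrices (not assumed to commute). Let $Z:\mathbb{R}\to\mathbb{R}^{d\times d}$ be the function defined in the context. Then \[ \dot Z(\vartheta)=A_0Z(\vartheta-\sigma)+Z(\vartheta-\sigma)A_1\qquad\text{for all }\vartheta\in(-\infty,\infty), \] where at the points $\vartheta=k\sigma$, $k\in\{-1,0,1,2,\dots\}$, the derivative $\dot Z(\vartheta)$ is understood as the right-hand derivative.
   Context: $\Theta$ and $I$ denote the $d\times d$ zero and identity matrices. Define matrices $Q_{r+1}(r\sigma)$, $r=0,1,2,\dots$, recursively by $Q_1(0)=I$ and $Q_{r+1}(r\sigma)=A_0Q_r((r-1)\sigma)+Q_r((r-1)\sigma)A_1$ for $r\ge 1$. Define $Z:\mathbb{R}\to\mathbb{R}^{d\times d}$ by $Z(\vartheta)=\Theta$ for $\vartheta<-\sigma$, and, for each integer $u\ge 0$ and $\vartheta\in[(u-1)\sigma,u\sigma)$, \[ Z(\vartheta)=\sum_{r=0}^{u}Q_{r+1}(r\sigma)\frac{(\vartheta-(r-1)\sigma)^r}{r!} \] (so $Z(\vartheta)=I$ on $[-\sigma,0)$, $Z(\vartheta)=I+Q_2(\sigma)\vartheta$ on $[0,\sigma)$, etc.). *)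

theory Defs
  imports "HOL-Analysis.Analysis"
begin

text \<open>Qm A0 A1 r is the matrix Q_{r+1}(r sigma) of the paper:
  Q_1(0) = I, Q_{r+1}(r sigma) = A0 Q_r((r-1) sigma) + Q_r((r-1) sigma) A1.\<close>
fun Qm :: "real^'n^'n \<Rightarrow> real^'n^'n \<Rightarrow> nat \<Rightarrow> real^'n^'n" where
  "Qm A0 A1 0 = mat 1"
| "Qm A0 A1 (Suc r) = A0 ** Qm A0 A1 r + Qm A0 A1 r ** A1"

definition Zfun :: "real^'n^'n \<Rightarrow> real^'n^'n \<Rightarrow> real \<Rightarrow> real \<Rightarrow> real^'n^'n" where
  "Zfun A0 A1 \<sigma> \<theta> =
     (if \<theta> < - \<sigma> then 0
      else (let u = nat (\<lfloor>\<theta> / \<sigma>\<rfloor> + 1) in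
            \<Sum>r\<in>{0..u}. ((\<theta> - (real r - 1) * \<sigma>) ^ r / fact r) *\<^sub>R Qm A0 A1 r))"

end

theory Submission
  imports Defs
begin

text \<open>On each interval \<open>[(u - 1) \<sigma>, u \<sigma>)\<close> the function \<open>Z\<close> is the matrix polynomial
  \<open>Z_piece u\<close>. Differentiating it termwise lowers every exponent by one, and since
  \<open>Q\<^sub>r\<^sub>+\<^sub>1 = A\<^sub>0 Q\<^sub>r + Q\<^sub>r A\<^sub>1\<close> the derivative is the Sylvester operator
  \<open>M \<mapsto> A\<^sub>0 M + M A\<^sub>1\<close> applied to \<open>Z_piece (u - 1)\<close> at \<open>\<theta> - \<sigma>\<close>, which is \<open>Z (\<theta> - \<sigma>)\<close>
  because \<open>\<theta> - \<sigma>\<close> lies in the preceding interval. At a breakpoint \<open>k \<sigma>\<close> only a right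
  neighbourhood lies in one interval, so only the right derivative is obtained there.\<close>

definition sylvester_op :: "real^'n^'n \<Rightarrow> real^'n^'n \<Rightarrow> real^'n^'n \<Rightarrow> real^'n^'n" where
  "sylvester_op A0 A1 M = A0 ** M + M ** A1"

lemma matrix_add_rdistrib: "(B + C) ** A = B ** A + C ** (A :: 'a::semiring_1^'n^'m)"
  by (vector matrix_matrix_mult_def sum.distrib distrib_right)

lemma linear_sylvester_op: "linear (sylvester_op A0 A1)"
  by (rule linearI)
    (simp_all add: sylvester_op_def matrix_add_ldistrib matrix_add_rdistrib
      matrix_scalar_ac scalar_matrix_assoc[symmetric] scaleR_add_right)

lemma Qm_Suc_sylvester: "Qm A0 A1 (Suc r) = sylvester_op A0 A1 (Qm A0 A1 r)"
  by (simp add: sylvester_op_def)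

definition Z_piece :: "real^'n^'n \<Rightarrow> real^'n^'n \<Rightarrow> real \<Rightarrow> nat \<Rightarrow> real \<Rightarrow> real^'n^'n" where
  "Z_piece A0 A1 \<sigma> u \<theta> = (\<Sum>r\<in>{0..u}. ((\<theta> - (real r - 1) * \<sigma>) ^ r / fact r) *\<^sub>R Qm A0 A1 r)"

lemma Z_piece_0 [simp]: "Z_piece A0 A1 \<sigma> 0 = (\<lambda>_. mat 1)"
  by (simp add: Z_piece_def fun_eq_iff)

lemma has_vector_derivative_Z_piece_Suc:
  "(Z_piece A0 A1 \<sigma> (Suc u) has_vector_derivative
      sylvester_op A0 A1 (Z_piece A0 A1 \<sigma> u (\<theta> - \<sigma>))) (at \<theta> within S)"
proof -
  let ?Q = "Qm A0 A1"
  have shift: "Z_piece A0 A1 \<sigma> (Suc u) =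
      (\<lambda>t. mat 1 + (\<Sum>r\<in>{0..u}. ((t - real r * \<sigma>) ^ Suc r / fact (Suc r)) *\<^sub>R ?Q (Suc r)))"
    unfolding Z_piece_def sum.atLeast0_atMost_Suc_shift by (simp add: fun_eq_iff)
  have term_deriv: "((\<lambda>t. (t - real r * \<sigma>) ^ Suc r / fact (Suc r)) has_real_derivative
      (\<theta> - real r * \<sigma>) ^ r / fact r) (at \<theta> within S)" for r
    by (rule derivative_eq_intros refl | simp)+
  have "(Z_piece A0 A1 \<sigma> (Suc u) has_vector_derivative
      (\<Sum>r\<in>{0..u}. ((\<theta> - real r * \<sigma>) ^ r / fact r) *\<^sub>R ?Q (Suc r))) (at \<theta> within S)"
    unfolding shift
    by (rule derivative_eq_intros has_vector_derivative_scaleR[OF term_deriv] | simp)+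
  also have "(\<Sum>r\<in>{0..u}. ((\<theta> - real r * \<sigma>) ^ r / fact r) *\<^sub>R ?Q (Suc r)) =
      sylvester_op A0 A1 (Z_piece A0 A1 \<sigma> u (\<theta> - \<sigma>))"
    by (simp add: Z_piece_def Qm_Suc_sylvester algebra_simps
        linear_sum[OF linear_sylvester_op] linear_cmul[OF linear_sylvester_op] del: Qm.simps)
  finally show ?thesis .
qed

lemma Zfun_eq_0: "\<theta> < - \<sigma> \<Longrightarrow> Zfun A0 A1 \<sigma> \<theta> = 0"
  by (simp add: Zfun_def)

lemma Zfun_eq_Z_piece:
  assumes "\<sigma> > 0" "(real u - 1) * \<sigma> \<le> \<theta>" "\<theta> < real u * \<sigma>"
  shows "Zfun A0 A1 \<sigma> \<theta> = Z_piece A0 A1 \<sigma> u \<theta>"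
proof -
  have "real u - 1 \<le> \<theta> / \<sigma>" "\<theta> / \<sigma> < real u"
    using assms by (simp_all add: field_simps)
  then have "nat (\<lfloor>\<theta> / \<sigma>\<rfloor> + 1) = u"
    by linarith
  moreover have "\<not> \<theta> < - \<sigma>"
  proof -
    have "0 \<le> real u * \<sigma>"
      using assms(1) by simp
    with assms(2) show ?thesis
      by (simp add: algebra_simps)
  qed
  ultimately show ?thesis
    by (simp add: Zfun_def Z_piece_def)
qed

lemma exists_Z_piece_interval:
  assumes "\<sigma> > 0" "- \<sigma> \<le> \<theta>"
  obtains u :: nat where "(real u - 1) * \<sigma> \<le> \<theta>" "\<theta> < real u * \<sigma>"
proof -
  let ?u = "nat (\<lfloor>\<theta> / \<sigma>\<rfloor> + 1)"
  have "-1 \<le> \<theta> / \<sigma>"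
    using assms by (simp add: field_simps)
  then have "real ?u - 1 \<le> \<theta> / \<sigma>" "\<theta> / \<sigma> < real ?u"
    by linarith+
  with assms(1) show ?thesis
    by (intro that[of ?u]) (simp_all add: field_simps)
qed

lemma has_vector_derivative_Z_piece_delayed:
  assumes "\<sigma> > 0" "(real u - 1) * \<sigma> \<le> \<theta>" "\<theta> < real u * \<sigma>"
  shows "(Z_piece A0 A1 \<sigma> u has_vector_derivative
      sylvester_op A0 A1 (Zfun A0 A1 \<sigma> (\<theta> - \<sigma>))) (at \<theta> within S)"
proof (cases u)
  case 0
  with assms(3) have "Zfun A0 A1 \<sigma> (\<theta> - \<sigma>) = 0"
    by (simp add: Zfun_eq_0)
  with 0 show ?thesis
    by (simp add: sylvester_op_def)
next
  case (Suc v)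
  with assms have "Zfun A0 A1 \<sigma> (\<theta> - \<sigma>) = Z_piece A0 A1 \<sigma> v (\<theta> - \<sigma>)"
    by (intro Zfun_eq_Z_piece) (simp_all add: algebra_simps)
  with Suc show ?thesis
    by (simp add: has_vector_derivative_Z_piece_Suc)
qed

lemma has_vector_derivative_Zfun_within:
  assumes "\<sigma> > 0" "(real u - 1) * \<sigma> \<le> \<theta>" "\<theta> < real u * \<sigma>"
    and "\<theta> \<in> S" "S \<subseteq> {(real u - 1) * \<sigma>..}"
  shows "(Zfun A0 A1 \<sigma> has_vector_derivative
      sylvester_op A0 A1 (Zfun A0 A1 \<sigma> (\<theta> - \<sigma>))) (at \<theta> within S)"
proof (rule has_vector_derivative_transform_within
    [OF has_vector_derivative_Z_piece_delayed[OF assms(1-3)]])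
  show "0 < real u * \<sigma> - \<theta>" "\<theta> \<in> S"
    using assms(3,4) by simp_all
  fix t
  assume "t \<in> S" "dist t \<theta> < real u * \<sigma> - \<theta>"
  with assms show "Z_piece A0 A1 \<sigma> u t = Zfun A0 A1 \<sigma> t"
    by (intro Zfun_eq_Z_piece[symmetric]) (auto simp: dist_real_def)
qed

lemma has_vector_derivative_Zfun_below:
  assumes "\<sigma> > 0" "\<theta> < - \<sigma>"
  shows "(Zfun A0 A1 \<sigma> has_vector_derivative
      sylvester_op A0 A1 (Zfun A0 A1 \<sigma> (\<theta> - \<sigma>))) (at \<theta>)"
proof -
  have "sylvester_op A0 A1 (Zfun A0 A1 \<sigma> (\<theta> - \<sigma>)) = 0"
    using assms by (simp add: Zfun_eq_0 sylvester_op_def)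
  moreover have "(Zfun A0 A1 \<sigma> has_vector_derivative 0) (at \<theta>)"
  proof (rule has_vector_derivative_transform_within_open)
    show "((\<lambda>_. 0) has_vector_derivative 0) (at \<theta>)"
      by simp
    show "open {..< - \<sigma>}" "\<theta> \<in> {..< - \<sigma>}"
      using assms(2) by simp_all
  qed (simp add: Zfun_eq_0)
  ultimately show ?thesis
    by simp
qed

theorem theorem1:
  fixes A0 A1 :: "real^'n^'n" and \<sigma> :: real
  assumes "\<sigma> > 0"
  shows "\<forall>\<theta>::real.
           (Zfun A0 A1 \<sigma> has_vector_derivative
              (A0 ** Zfun A0 A1 \<sigma> (\<theta> - \<sigma>) + Zfun A0 A1 \<sigma> (\<theta> - \<sigma>) ** A1))
             (at \<theta> within {\<theta>..})
         \<and> ((\<forall>k::int. k \<ge> -1 \<longrightarrow> \<theta> \<noteq> real_of_int k * \<sigma>) \<longrightarrow>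
           (Zfun A0 A1 \<sigma> has_vector_derivative
              (A0 ** Zfun A0 A1 \<sigma> (\<theta> - \<sigma>) + Zfun A0 A1 \<sigma> (\<theta> - \<sigma>) ** A1))
             (at \<theta>))"
  unfolding sylvester_op_def[symmetric]
proof (intro allI conjI impI)
  fix \<theta>
  let ?Z = "Zfun A0 A1 \<sigma>"
  let ?Z' = "sylvester_op A0 A1 (?Z (\<theta> - \<sigma>))"
  show "(?Z has_vector_derivative ?Z') (at \<theta> within {\<theta>..})"
  proof (cases "\<theta> < - \<sigma>")
    case True
    then show ?thesis
      by (rule has_vector_derivative_at_within[OF has_vector_derivative_Zfun_below[OF assms]])
  next
    case False
    then have "- \<sigma> \<le> \<theta>"
      by simp
    then obtain u where u: "(real u - 1) * \<sigma> \<le> \<theta>" "\<theta> < real u * \<sigma>"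
      by (rule exists_Z_piece_interval[OF assms])
    show ?thesis
      using u(1) by (intro has_vector_derivative_Zfun_within[OF assms u]) auto
  qed
  assume off_grid: "\<forall>k::int. k \<ge> -1 \<longrightarrow> \<theta> \<noteq> real_of_int k * \<sigma>"
  show "(?Z has_vector_derivative ?Z') (at \<theta>)"
  proof (cases "\<theta> < - \<sigma>")
    case True
    then show ?thesis
      by (rule has_vector_derivative_Zfun_below[OF assms])
  next
    case False
    then have "- \<sigma> \<le> \<theta>"
      by simp
    then obtain u where u: "(real u - 1) * \<sigma> \<le> \<theta>" "\<theta> < real u * \<sigma>"
      by (rule exists_Z_piece_interval[OF assms])
    have "\<theta> \<noteq> real_of_int (int u - 1) * \<sigma>"
      using off_grid[rule_format, of "int u - 1"] by simp
    with u have interior: "\<theta> \<in> {(real u - 1) * \<sigma> <..< real u * \<sigma>}"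
      by simp
    have "(?Z has_vector_derivative ?Z')
        (at \<theta> within {(real u - 1) * \<sigma> <..< real u * \<sigma>})"
      using interior by (intro has_vector_derivative_Zfun_within[OF assms u]) auto
    then show ?thesis
      by (simp only: at_within_open[OF interior open_greaterThanLessThan])
  qed
qed

end
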